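(* Let $M$ be an $m_1\times m_2\times m_3$ table with $m_1\ge m_2\ge m_3$, containing $m_1m_2m_3$ distinct (labeled) items, one in each cell. A shuffle operation arbitrarily permutes the items lying in a single column of $M$ in one of the three dimensions (i.e., the cells of a line parallel to one coordinate axis). Then for any two arrangements $S$ and $G$ of the items, $M$ can be taken from $S$ to $G$ using at most $m_1m_2+m_3(2m_2+m_1)+m_1m_2$ shuffles. *)

theory Defs
  imports "HOL-Combinatorics.Permutations"
begin

definition cells :: "nat \<Rightarrow> nat \<Rightarrow> nat \<Rightarrow> (nat \<times> nat \<times> nat) set" where
  "cells m1 m2 m3 = {(i, j, k). i < m1 \<and> j < m2 \<and> k < m3}"

definition table_lines :: "nat \<Rightarrow> nat \<Rightarrow> nat \<Rightarrow> (nat \<times> nat \<times> nat) set set" where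
  "table_lines m1 m2 m3 =
     {{(i, j, k) | i. i < m1} | j k. j < m2 \<and> k < m3}
   \<union> {{(i, j, k) | j. j < m2} | i k. i < m1 \<and> k < m3}
   \<union> {{(i, j, k) | k. k < m3} | i j. i < m1 \<and> j < m2}"

definition is_shuffle :: "nat \<Rightarrow> nat \<Rightarrow> nat \<Rightarrow> (nat \<times> nat \<times> nat \<Rightarrow> nat \<times> nat \<times> nat) \<Rightarrow> bool" where
  "is_shuffle m1 m2 m3 p \<longleftrightarrow> (\<exists>L \<in> table_lines m1 m2 m3. p permutes L)"

text \<open>An arrangement of distinct items: a bijection from the cells to the item set.
  Applying shuffle p to arrangement A gives the arrangement A \<circ> p
  (the item at cell c is the item previously at cell p c).\<close>
definition apply_shuffles :: "('c \<Rightarrow> 'b) \<Rightarrow> ('c \<Rightarrow> 'c) list \<Rightarrow> 'c \<Rightarrow> 'b" where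
  "apply_shuffles A ps = fold (\<lambda>p B. B \<circ> p) ps A"

end

theory Submission
  imports Defs
begin

text \<open>Let \<open>\<sigma>\<close> be the permutation of the cells with \<open>S \<circ> \<sigma> = G\<close>, and view the table as \<open>m1 m2\<close>
  lines along the third axis, each with \<open>m3\<close> cells. Koenig's theorem (a \<open>d\<close>-regular bipartite
  multigraph has a proper \<open>d\<close>-edge-colouring, proved via Hall's theorem) gives the Clos
  factorisation \<open>\<sigma> = \<alpha> \<circ> \<beta> \<circ> \<gamma>\<close>: \<open>\<alpha>\<close> and \<open>\<gamma>\<close> move cells only inside their third-axis lines and
  \<open>\<beta>\<close> keeps the third coordinate. Factoring \<open>\<beta>\<close> the same way with respect to the first axis gives
  \<open>\<beta> = \<alpha>' \<circ> \<beta>' \<circ> \<gamma>'\<close>, where \<open>\<beta>'\<close> keeps the first and third coordinates. A permutation that moves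
  cells only inside the lines of one direction is a product of one shuffle per line, so \<open>\<sigma>\<close> needs
  \<open>m1 m2 + m2 m3 + m1 m3 + m2 m3 + m1 m2\<close> shuffles.\<close>

section \<open>Hall's marriage theorem\<close>

lemma hall_condition_singleton:
  assumes "\<And>A. A \<subseteq> P \<Longrightarrow> card A \<le> card (\<Union>(N ` A))" "u \<in> P"
  shows "finite (N u)" "N u \<noteq> {}"
  using assms(1)[of "{u}"] assms(2) by (auto intro: card_ge_0_finite)

lemma hall_condition_outside_tight_set:
  fixes N :: "'a \<Rightarrow> 'b set"
  assumes hall: "\<And>A. A \<subseteq> P \<Longrightarrow> card A \<le> card (\<Union>(N ` A))" and "finite P"
    and T: "T \<subseteq> P" "card (\<Union>(N ` T)) \<le> card T" and B: "B \<subseteq> P - T"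
  shows "card B \<le> card (\<Union>u\<in>B. N u - \<Union>(N ` T))"
proof -
  have fin: "finite T" "finite B"
    using finite_subset[OF T(1)] finite_subset[OF B] \<open>finite P\<close> by auto
  moreover have "finite (N u)" if "u \<in> T \<union> B" for u
    using hall_condition_singleton(1)[of P N, OF hall] that T(1) B by blast
  ultimately have finUN: "finite (\<Union>(N ` (T \<union> B)))" by blast
  have TB: "card (T \<union> B) \<le> card (\<Union>(N ` (T \<union> B)))" using T(1) B by (intro hall) auto
  have "card B = card (T \<union> B) - card T" using fin B by (subst card_Un_disjoint) auto
  also have "\<dots> \<le> card (\<Union>(N ` (T \<union> B))) - card (\<Union>(N ` T))" using TB T(2) by linarith
  also have "\<dots> = card (\<Union>(N ` (T \<union> B)) - \<Union>(N ` T))" using finUN by (simp add: card_Diff_subset)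
  also have "\<dots> = card (\<Union>u\<in>B. N u - \<Union>(N ` T))" by (rule arg_cong[where f = card]) blast
  finally show ?thesis .
qed

lemma hall_condition_without_point:
  fixes N :: "'a \<Rightarrow> 'b set"
  assumes surplus: "\<And>A. A \<subseteq> P \<Longrightarrow> A \<noteq> {} \<Longrightarrow> A \<noteq> P \<Longrightarrow> card A < card (\<Union>(N ` A))"
    and B: "B \<subseteq> P - {u}" "u \<in> P"
  shows "card B \<le> card (\<Union>v\<in>B. N v - {y})"
proof (cases "B = {}")
  case False
  then have "card B < card (\<Union>(N ` B))" using B by (intro surplus) auto
  then have "card B \<le> card (\<Union>(N ` B)) - card {y}" by simp
  also have "\<dots> \<le> card (\<Union>(N ` B) - {y})" by (rule diff_card_le_card_Diff) simp
  also have "\<dots> = card (\<Union>v\<in>B. N v - {y})" by (rule arg_cong[where f = card]) blast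
  finally show ?thesis .
qed simp

theorem hall_marriage:
  fixes N :: "'a \<Rightarrow> 'b set"
  assumes "finite P" and "\<And>A. A \<subseteq> P \<Longrightarrow> card A \<le> card (\<Union>(N ` A))"
  shows "\<exists>h. inj_on h P \<and> (\<forall>u\<in>P. h u \<in> N u)"
  using assms
proof (induction P arbitrary: N rule: finite_psubset_induct)
  case (psubset P)
  note hall = psubset.prems
  consider "P = {}"
    | (tight) T where "T \<subseteq> P" "T \<noteq> {}" "T \<noteq> P" "card (\<Union>(N ` T)) \<le> card T"
    | (surplus) "P \<noteq> {}" "\<And>A. A \<subseteq> P \<Longrightarrow> A \<noteq> {} \<Longrightarrow> A \<noteq> P \<Longrightarrow> card A < card (\<Union>(N ` A))"
    by (meson not_le)
  then show ?case
  proof cases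
    case tight
    have "T \<subset> P" "P - T \<subset> P" using tight(1-3) by blast+
    have hall_T: "card A \<le> card (\<Union>(N ` A))" if "A \<subseteq> T" for A
      using that tight(1) by (intro hall) auto
    obtain h1 where h1: "inj_on h1 T" "\<forall>u\<in>T. h1 u \<in> N u"
      using psubset.IH[OF \<open>T \<subset> P\<close> hall_T] by blast
    have "\<exists>h. inj_on h (P - T) \<and> (\<forall>u\<in>P - T. h u \<in> N u - \<Union>(N ` T))"
      by (rule psubset.IH[OF \<open>P - T \<subset> P\<close>])
        (rule hall_condition_outside_tight_set[OF hall psubset.hyps tight(1,4)])
    then obtain h2 where h2: "inj_on h2 (P - T)" "\<forall>u\<in>P - T. h2 u \<in> N u - \<Union>(N ` T)"
      by blast
    have "h1 ` T \<subseteq> \<Union>(N ` T)" using h1(2) by blast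
    moreover have "h2 ` (P - T) \<inter> \<Union>(N ` T) = {}" using h2(2) by blast
    ultimately have "h1 ` T \<inter> h2 ` (P - T) = {}" by blast
    then have "inj_on (\<lambda>x. if x \<in> T then h1 x else h2 x) (T \<union> (P - T))"
      using h1(1) h2(1) by (intro inj_on_disjoint_Un)
    moreover have "T \<union> (P - T) = P" using tight(1) by blast
    ultimately show ?thesis using h1(2) h2(2)
      by (intro exI[of _ "\<lambda>x. if x \<in> T then h1 x else h2 x"]) auto
  next
    case surplus
    then obtain u where u: "u \<in> P" by blast
    then obtain y where y: "y \<in> N u" using hall_condition_singleton(2)[of P N, OF hall] by blast
    have "P - {u} \<subset> P" using u by blast
    have "\<exists>h. inj_on h (P - {u}) \<and> (\<forall>v\<in>P - {u}. h v \<in> N v - {y})"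
      by (rule psubset.IH[OF \<open>P - {u} \<subset> P\<close>]) (rule hall_condition_without_point[OF surplus(2) _ u])
    then obtain h2 where h2: "inj_on h2 (P - {u})" "\<forall>v\<in>P - {u}. h2 v \<in> N v - {y}"
      by blast
    have "inj_on (\<lambda>x. if x \<in> {u} then y else h2 x) ({u} \<union> (P - {u}))"
      using h2 by (intro inj_on_disjoint_Un) auto
    moreover have "{u} \<union> (P - {u}) = P" using u by blast
    ultimately show ?thesis using h2(2) y
      by (intro exI[of _ "\<lambda>x. if x \<in> {u} then y else h2 x"]) auto
  qed simp
qed

section \<open>Edge colourings of regular bipartite multigraphs\<close>

lemma card_preimage_regular:
  assumes "finite X" "finite A" "\<And>u. u \<in> A \<Longrightarrow> card {x\<in>X. s x = u} = d"
  shows "card {x\<in>X. s x \<in> A} = d * card A"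
proof -
  have "{x\<in>X. s x \<in> A} = (\<Union>u\<in>A. {x\<in>X. s x = u})" by blast
  then have "card {x\<in>X. s x \<in> A} = (\<Sum>u\<in>A. card {x\<in>X. s x = u})"
    using assms(1,2) by (simp only:) (rule card_UN_disjoint; auto)
  then show ?thesis using assms(3) by simp
qed

lemma regular_imp_image_eq:
  assumes "s ` X \<subseteq> P" "0 < d" "\<And>u. u \<in> P \<Longrightarrow> card {x\<in>X. s x = u} = d"
  shows "s ` X = P"
proof
  show "P \<subseteq> s ` X"
  proof
    fix u assume "u \<in> P"
    then have "{x\<in>X. s x = u} \<noteq> {}" using assms(2,3) by (metis card.empty less_irrefl)
    then show "u \<in> s ` X" by blast
  qed
qed (fact assms(1))

theorem regular_bipartite_perfect_matching:
  assumes "finite X" "s ` X \<subseteq> P" "t ` X \<subseteq> Q" "0 < d"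
    and s_regular: "\<And>u. u \<in> P \<Longrightarrow> card {x\<in>X. s x = u} = d"
    and t_regular: "\<And>v. v \<in> Q \<Longrightarrow> card {x\<in>X. t x = v} = d"
  shows "\<exists>M\<subseteq>X. bij_betw s M P \<and> bij_betw t M Q"
proof -
  have P: "s ` X = P" using regular_imp_image_eq[OF assms(2,4) s_regular] .
  have Q: "t ` X = Q" using regular_imp_image_eq[OF assms(3,4) t_regular] .
  have "finite P" "finite Q" using \<open>finite X\<close> P Q by blast+
  have card_s: "card {x\<in>X. s x \<in> A} = d * card A" if "A \<subseteq> P" for A
    using that by (intro card_preimage_regular[OF \<open>finite X\<close>] finite_subset[OF that \<open>finite P\<close>]
        s_regular) auto
  have card_t: "card {x\<in>X. t x \<in> B} = d * card B" if "B \<subseteq> Q" for B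
    using that by (intro card_preimage_regular[OF \<open>finite X\<close>] finite_subset[OF that \<open>finite Q\<close>]
        t_regular) auto
  define N where "N u = t ` {x\<in>X. s x = u}" for u
  have "card A \<le> card (\<Union>(N ` A))" if A: "A \<subseteq> P" for A
  proof -
    have "d * card A = card {x\<in>X. s x \<in> A}" using card_s[OF A] by simp
    also have "\<dots> \<le> card {x\<in>X. t x \<in> \<Union>(N ` A)}"
      by (rule card_mono) (auto simp: N_def \<open>finite X\<close>)
    also have "\<dots> = d * card (\<Union>(N ` A))" by (rule card_t) (auto simp: N_def Q[symmetric])
    finally show ?thesis using \<open>0 < d\<close> by simp
  qed
  then obtain h where h: "inj_on h P" "\<forall>u\<in>P. h u \<in> N u"
    using hall_marriage[OF \<open>finite P\<close>] by blast
  have "{x\<in>X. s x \<in> P} = X" "{x\<in>X. t x \<in> Q} = X" using P Q by blast+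
  then have "d * card P = d * card Q" using card_s[of P] card_t[of Q] by simp
  then have "card (h ` P) = card Q" using \<open>0 < d\<close> card_image[OF h(1)] by simp
  moreover have "h ` P \<subseteq> Q" using h(2) Q by (auto simp: N_def)
  ultimately have "bij_betw h P Q" using h(1) \<open>finite Q\<close> card_subset_eq by (metis bij_betw_def)
  have "\<exists>x\<in>X. s x = u \<and> t x = h u" if "u \<in> P" for u
  proof -
    have "h u \<in> t ` {x\<in>X. s x = u}" using h(2) that by (simp add: N_def)
    then show ?thesis by (auto simp: image_iff)
  qed
  then obtain e where e: "\<And>u. u \<in> P \<Longrightarrow> e u \<in> X \<and> s (e u) = u \<and> t (e u) = h u"
    by metis
  have s_bij: "bij_betw s (e ` P) P"
    by (rule bij_betw_byWitness[where f' = e]) (use e in auto)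
  moreover have "bij_betw t (e ` P) Q"
  proof -
    have "bij_betw (h \<circ> s) (e ` P) Q" using s_bij \<open>bij_betw h P Q\<close> by (rule bij_betw_trans)
    moreover have "bij_betw (h \<circ> s) (e ` P) Q = bij_betw t (e ` P) Q"
      by (rule bij_betw_cong) (use e in auto)
    ultimately show ?thesis by simp
  qed
  moreover have "e ` P \<subseteq> X" using e by auto
  ultimately show ?thesis by blast
qed

lemma card_fibre_Diff_matching:
  assumes "finite X" "M \<subseteq> X" "bij_betw s M P" "u \<in> P"
  shows "card {x\<in>X - M. s x = u} = card {x\<in>X. s x = u} - 1"
proof -
  have M_fibre: "{x\<in>M. s x = u} = {inv_into M s u}"
    using assms(3,4) by (auto simp: bij_betw_def inj_on_def inv_into_f_f)
  then have eq: "{x\<in>X - M. s x = u} = {x\<in>X. s x = u} - {inv_into M s u}" by blast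
  have "inv_into M s u \<in> {x\<in>X. s x = u}" using M_fibre assms(2) by blast
  then show ?thesis unfolding eq using assms(1) by (simp add: card_Diff_singleton)
qed

lemma inj_on_extend_colouring:
  fixes d :: nat
  assumes "M \<subseteq> X" "inj_on s M" "inj_on (\<lambda>x. (s x, col x)) (X - M)" "\<forall>x\<in>X - M. col x < d"
  shows "inj_on (\<lambda>x. (s x, if x \<in> M then d else col x)) X"
proof -
  have "inj_on (\<lambda>x. (s x, d)) M" using assms(2) unfolding inj_on_def by simp
  moreover have "(\<lambda>x. (s x, d)) ` M \<inter> (\<lambda>x. (s x, col x)) ` (X - M) = {}" using assms(4) by fastforce
  ultimately have "inj_on (\<lambda>x. if x \<in> M then (s x, d) else (s x, col x)) (M \<union> (X - M))"
    using assms(3) by (intro inj_on_disjoint_Un)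
  moreover have "M \<union> (X - M) = X" using assms(1) by blast
  ultimately show ?thesis by (simp add: if_distrib)
qed

theorem regular_bipartite_edge_colouring:
  assumes "finite X" "s ` X \<subseteq> P" "t ` X \<subseteq> Q"
    and "\<And>u. u \<in> P \<Longrightarrow> card {x\<in>X. s x = u} = d"
    and "\<And>v. v \<in> Q \<Longrightarrow> card {x\<in>X. t x = v} = d"
  shows "\<exists>col. (\<forall>x\<in>X. col x < d) \<and> inj_on (\<lambda>x. (s x, col x)) X \<and> inj_on (\<lambda>x. (t x, col x)) X"
  using assms
proof (induction d arbitrary: X)
  case 0
  have "X = {}"
  proof (rule ccontr)
    assume "X \<noteq> {}"
    then obtain x where "x \<in> X" by blast
    then have "x \<in> {y\<in>X. s y = s x}" "card {y\<in>X. s y = s x} = 0" using "0.prems"(2,4) by auto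
    then show False using \<open>finite X\<close> by auto
  qed
  then show ?case by simp
next
  case (Suc d)
  obtain M where M: "M \<subseteq> X" "bij_betw s M P" "bij_betw t M Q"
    using regular_bipartite_perfect_matching[of X s P t Q "Suc d"] Suc.prems by blast
  have "card {x\<in>X - M. s x = u} = d" if "u \<in> P" for u
    using card_fibre_Diff_matching[OF Suc.prems(1) M(1,2) that] Suc.prems(4) that by simp
  moreover have "card {x\<in>X - M. t x = v} = d" if "v \<in> Q" for v
    using card_fibre_Diff_matching[OF Suc.prems(1) M(1,3) that] Suc.prems(5) that by simp
  ultimately obtain col where col: "\<forall>x\<in>X - M. col x < d"
    "inj_on (\<lambda>x. (s x, col x)) (X - M)" "inj_on (\<lambda>x. (t x, col x)) (X - M)"
    using Suc.IH[of "X - M"] Suc.prems(1-3) by blast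
  have "inj_on (\<lambda>x. (s x, if x \<in> M then d else col x)) X"
    using M(1,2) col(1,2) by (intro inj_on_extend_colouring) (auto simp: bij_betw_def)
  moreover have "inj_on (\<lambda>x. (t x, if x \<in> M then d else col x)) X"
    using M(1,3) col(1,3) by (intro inj_on_extend_colouring) (auto simp: bij_betw_def)
  moreover have "\<forall>x\<in>X. (if x \<in> M then d else col x) < Suc d" using col(1) by (auto intro: less_SucI)
  ultimately show ?case by (intro exI[of _ "\<lambda>x. if x \<in> M then d else col x"]) blast
qed

section \<open>Three-stage factorisation of permutations\<close>

lemma card_fibre_permutes:
  assumes "\<sigma> permutes C"
  shows "card {c\<in>C. g (\<sigma> c) = a} = card {c\<in>C. g c = a}"
proof -
  have eq: "{c\<in>C. g (\<sigma> c) = a} = \<sigma> -` {c\<in>C. g c = a}"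
    using permutes_in_image[OF assms] by auto
  have "card (\<sigma> -` {c\<in>C. g c = a}) = card {c\<in>C. g c = a}"
    by (rule card_vimage_inj[OF permutes_inj[OF assms]]) (use permutes_surj[OF assms] in auto)
  then show ?thesis unfolding eq .
qed

lemma permutes_comp_inv_preserves:
  assumes "p permutes C" "\<And>x. x \<in> C \<Longrightarrow> k (q x) = k (p x)" "y \<in> C"
  shows "k ((q \<circ> inv p) y) = k y"
proof -
  have "inv p y \<in> C" using assms(3) permutes_in_image[OF permutes_inv[OF assms(1)]] by simp
  moreover have "p (inv p y) = y" using permutes_inverses(1)[OF assms(1)] .
  ultimately show ?thesis using assms(2) by (metis comp_apply)
qed

lemma card_fibre_grid:
  assumes grid: "bij_betw (\<lambda>c. (f c, e c)) C (f ` C \<times> {..<d})" and "a \<in> f ` C"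
  shows "card {c\<in>C. f c = a} = d"
proof -
  let ?\<phi> = "\<lambda>c. (f c, e c)"
  have "?\<phi> ` {c\<in>C. f c = a} = {p \<in> ?\<phi> ` C. fst p = a}" by auto
  also have "\<dots> = {a} \<times> {..<d}" using assms by (auto simp: bij_betw_def)
  finally have image: "?\<phi> ` {c\<in>C. f c = a} = {a} \<times> {..<d}" .
  have "inj_on ?\<phi> {c\<in>C. f c = a}"
    using grid by (auto simp: bij_betw_def intro: inj_on_subset)
  then have "card {c\<in>C. f c = a} = card (?\<phi> ` {c\<in>C. f c = a})" by (rule card_image[symmetric])
  also have "\<dots> = d" unfolding image by (simp add: card_cartesian_product)
  finally show ?thesis .
qed

lemma grid_coordinates_permutation:
  assumes "finite C" and grid: "bij_betw (\<lambda>c. (f c, e c)) C (f ` C \<times> {..<d})"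
    and "\<forall>c\<in>C. a c \<in> f ` C \<and> n c < d" "inj_on (\<lambda>c. (a c, n c)) C"
  shows "\<exists>\<rho>. \<rho> permutes C \<and> (\<forall>c\<in>C. f (\<rho> c) = a c \<and> e (\<rho> c) = n c)"
proof -
  let ?\<phi> = "\<lambda>c. (f c, e c)"
  define \<rho> where "\<rho> c = (if c \<in> C then inv_into C ?\<phi> (a c, n c) else c)" for c
  have \<rho>: "\<rho> c \<in> C \<and> ?\<phi> (\<rho> c) = (a c, n c)" if "c \<in> C" for c
    using bij_betw_inv_into_right[OF grid] bij_betw_inv_into[OF grid] assms(3) that
    by (auto simp: \<rho>_def bij_betw_def)
  have "inj_on (?\<phi> \<circ> \<rho>) C"
    by (subst inj_on_cong[where g = "\<lambda>c. (a c, n c)"]) (use \<rho> assms(4) in auto)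
  then have "\<rho> permutes C"
    using \<rho> by (intro inj_imp_permutes[OF inj_on_imageI2 \<open>finite C\<close>]) (auto simp: \<rho>_def)
  then show ?thesis using \<rho> by auto
qed

text \<open>The hypothesis \<open>grid\<close> says that the fibres of \<open>f\<close> are rows of length \<open>d\<close>, in which \<open>e\<close>
  is the position. This is the rearrangeability of Clos networks: colour the edges \<open>f c \<mapsto> f (\<sigma> c)\<close>
  of a \<open>d\<close>-regular bipartite multigraph with \<open>d\<close> colours; \<open>\<gamma>\<close> and \<open>\<zeta>\<close> move each \<open>c\<close> to position
  \<open>\<kappa> c\<close> of the rows of \<open>c\<close> and of \<open>\<sigma> c\<close>, and \<open>\<zeta> \<circ> inv \<gamma>\<close> keeps positions.\<close>
theorem permutes_three_stage_factorisation:
  fixes f :: "'c \<Rightarrow> 'f" and e :: "'c \<Rightarrow> nat"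
  assumes "finite C" "\<sigma> permutes C"
    and grid: "bij_betw (\<lambda>c. (f c, e c)) C (f ` C \<times> {..<d})"
  shows "\<exists>\<alpha> \<beta> \<gamma>. \<alpha> permutes C \<and> \<beta> permutes C \<and> \<gamma> permutes C
    \<and> (\<forall>c\<in>C. f (\<alpha> c) = f c) \<and> (\<forall>c\<in>C. e (\<beta> c) = e c) \<and> (\<forall>c\<in>C. f (\<gamma> c) = f c)
    \<and> \<sigma> = \<alpha> \<circ> \<beta> \<circ> \<gamma>"
proof -
  have \<sigma>_in: "\<sigma> c \<in> C" if "c \<in> C" for c using that \<open>\<sigma> permutes C\<close> by (simp add: permutes_in_image)
  have "(f \<circ> \<sigma>) ` C \<subseteq> f ` C" using \<sigma>_in by auto
  moreover have "card {c\<in>C. (f \<circ> \<sigma>) c = a} = d" if "a \<in> f ` C" for a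
    using card_fibre_permutes[OF \<open>\<sigma> permutes C\<close>, of f a] card_fibre_grid[OF grid that] by simp
  ultimately have "\<exists>\<kappa>. (\<forall>c\<in>C. \<kappa> c < d) \<and> inj_on (\<lambda>c. (f c, \<kappa> c)) C
      \<and> inj_on (\<lambda>c. ((f \<circ> \<sigma>) c, \<kappa> c)) C"
    by (intro regular_bipartite_edge_colouring[OF \<open>finite C\<close> subset_refl _ card_fibre_grid[OF grid]])
  then obtain \<kappa> where \<kappa>: "\<forall>c\<in>C. \<kappa> c < d" "inj_on (\<lambda>c. (f c, \<kappa> c)) C"
    "inj_on (\<lambda>c. ((f \<circ> \<sigma>) c, \<kappa> c)) C"
    by blast
  obtain \<gamma> where \<gamma>: "\<gamma> permutes C" "\<forall>c\<in>C. f (\<gamma> c) = f c \<and> e (\<gamma> c) = \<kappa> c"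
    using grid_coordinates_permutation[OF \<open>finite C\<close> grid _ \<kappa>(2)] \<kappa>(1) by blast
  obtain \<zeta> where \<zeta>: "\<zeta> permutes C" "\<forall>c\<in>C. f (\<zeta> c) = f (\<sigma> c) \<and> e (\<zeta> c) = \<kappa> c"
    using grid_coordinates_permutation[OF \<open>finite C\<close> grid _ \<kappa>(3)] \<kappa>(1) \<sigma>_in by fastforce
  have "\<sigma> = (\<sigma> \<circ> inv \<zeta>) \<circ> (\<zeta> \<circ> inv \<gamma>) \<circ> \<gamma>"
    using permutes_inv_o(2)[OF \<zeta>(1)] permutes_inv_o(2)[OF \<gamma>(1)] by (simp add: comp_assoc)
  moreover have "f ((\<sigma> \<circ> inv \<zeta>) c) = f c" if "c \<in> C" for c
    using \<zeta> that by (intro permutes_comp_inv_preserves) auto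
  moreover have "e ((\<zeta> \<circ> inv \<gamma>) c) = e c" if "c \<in> C" for c
    using \<gamma> \<zeta> that by (intro permutes_comp_inv_preserves) auto
  moreover have "\<sigma> \<circ> inv \<zeta> permutes C" "\<zeta> \<circ> inv \<gamma> permutes C"
    using \<open>\<sigma> permutes C\<close> \<zeta>(1) \<gamma>(1) by (blast intro: permutes_compose permutes_inv)+
  ultimately show ?thesis using \<gamma> by blast
qed

lemma middle_factor_preserves:
  assumes "\<sigma> = \<alpha> \<circ> \<beta> \<circ> \<gamma>" "\<beta> permutes C" "\<gamma> permutes C"
    and "\<forall>c\<in>C. g (\<alpha> c) = g c" "\<forall>c\<in>C. g (\<gamma> c) = g c" "\<forall>c\<in>C. g (\<sigma> c) = g c"
    and "y \<in> C"
  shows "g (\<beta> y) = g y"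
proof -
  define x where "x = inv \<gamma> y"
  have "x \<in> C" "\<gamma> x = y"
    using assms(7) permutes_in_image[OF permutes_inv[OF assms(3)]] permutes_inverses(1)[OF assms(3)]
    by (simp_all add: x_def)
  moreover have "\<beta> y \<in> C" using assms(2,7) by (simp add: permutes_in_image)
  ultimately show ?thesis using assms(1,4-6) by (metis comp_apply)
qed

section \<open>Shuffles of the table\<close>

lemma cells_eq: "cells m1 m2 m3 = {..<m1} \<times> {..<m2} \<times> {..<m3}"
  by (auto simp: cells_def)

lemma finite_cells: "finite (cells m1 m2 m3)"
  by (simp add: cells_eq)

definition fibre_restriction :: "('c \<Rightarrow> 'c) \<Rightarrow> ('c \<Rightarrow> 'k) \<Rightarrow> 'k \<Rightarrow> 'c \<Rightarrow> 'c" where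
  "fibre_restriction \<pi> key \<kappa> x = (if key x = \<kappa> then \<pi> x else x)"

lemma fibre_restriction_permutes:
  assumes "finite C" "\<pi> permutes C" "\<forall>c\<in>C. key (\<pi> c) = key c"
  shows "fibre_restriction \<pi> key \<kappa> permutes {c\<in>C. key c = \<kappa>}"
proof (rule inj_imp_permutes)
  show "inj_on (fibre_restriction \<pi> key \<kappa>) {c\<in>C. key c = \<kappa>}"
    using permutes_inj[OF assms(2)] by (simp add: inj_on_def inj_def fibre_restriction_def)
qed (use assms permutes_in_image[OF assms(2)] permutes_not_in[OF assms(2)] in
    \<open>auto simp: fibre_restriction_def\<close>)

definition realisable_by_shuffles ::
    "nat \<Rightarrow> nat \<Rightarrow> nat \<Rightarrow> nat \<Rightarrow> (nat \<times> nat \<times> nat \<Rightarrow> nat \<times> nat \<times> nat) \<Rightarrow> bool" where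
  "realisable_by_shuffles m1 m2 m3 n \<pi> \<longleftrightarrow>
     (\<exists>ps. length ps = n \<and> (\<forall>p\<in>set ps. is_shuffle m1 m2 m3 p) \<and> foldr (\<circ>) ps id = \<pi>)"

lemma apply_shuffles_eq_comp: "apply_shuffles A ps = A \<circ> foldr (\<circ>) ps id"
  unfolding apply_shuffles_def by (induction ps arbitrary: A) (simp_all add: comp_assoc)

lemma foldr_comp_append: "foldr (\<circ>) (xs @ ys) id = foldr (\<circ>) xs id \<circ> foldr (\<circ>) ys id"
  by (induction xs) (simp_all add: comp_assoc)

lemma realisable_by_shuffles_comp:
  assumes "realisable_by_shuffles m1 m2 m3 a \<pi>" "realisable_by_shuffles m1 m2 m3 b \<rho>"
  shows "realisable_by_shuffles m1 m2 m3 (a + b) (\<pi> \<circ> \<rho>)"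
proof -
  obtain xs ys where "length xs = a" "\<forall>p\<in>set xs. is_shuffle m1 m2 m3 p" "foldr (\<circ>) xs id = \<pi>"
    "length ys = b" "\<forall>p\<in>set ys. is_shuffle m1 m2 m3 p" "foldr (\<circ>) ys id = \<rho>"
    using assms unfolding realisable_by_shuffles_def by blast
  then show ?thesis unfolding realisable_by_shuffles_def
    by (intro exI[of _ "xs @ ys"]) (auto simp: foldr_comp_append simp del: foldr_append)
qed

lemma foldr_fibre_restrictions:
  assumes "distinct ks" "\<And>x. key (\<pi> x) = key x"
  shows "foldr (\<circ>) (map (fibre_restriction \<pi> key) ks) id x = (if key x \<in> set ks then \<pi> x else x)"
  using assms(1) by (induction ks) (auto simp: fibre_restriction_def assms(2))

lemma foldr_fibre_restrictions_eq:
  assumes "\<pi> permutes C" "\<forall>c\<in>C. key (\<pi> c) = key c" "distinct ks" "key ` C \<subseteq> set ks"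
  shows "foldr (\<circ>) (map (fibre_restriction \<pi> key) ks) id = \<pi>"
proof
  have "key (\<pi> x) = key x" for x
    using assms(2) permutes_not_in[OF assms(1)] by (cases "x \<in> C") auto
  then show "foldr (\<circ>) (map (fibre_restriction \<pi> key) ks) id x = \<pi> x" for x
    using foldr_fibre_restrictions[OF assms(3), of key \<pi> x] assms(4) permutes_not_in[OF assms(1)]
    by (cases "x \<in> C") auto
qed

lemma realisable_by_line_shuffles:
  assumes "\<pi> permutes cells m1 m2 m3" "\<forall>c\<in>cells m1 m2 m3. key (\<pi> c) = key c"
    and "distinct ks" "key ` cells m1 m2 m3 \<subseteq> set ks"
    and "\<And>\<kappa>. \<kappa> \<in> set ks \<Longrightarrow> {c\<in>cells m1 m2 m3. key c = \<kappa>} \<in> table_lines m1 m2 m3"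
  shows "realisable_by_shuffles m1 m2 m3 (length ks) \<pi>"
  unfolding realisable_by_shuffles_def
proof (intro exI conjI)
  let ?ps = "map (fibre_restriction \<pi> key) ks"
  show "\<forall>p\<in>set ?ps. is_shuffle m1 m2 m3 p"
    using fibre_restriction_permutes[OF finite_cells assms(1,2)] assms(5)
    by (auto simp: is_shuffle_def)
  show "foldr (\<circ>) ?ps id = \<pi>" using foldr_fibre_restrictions_eq[OF assms(1-4)] .
qed simp

lemma realisable_along_axis3:
  assumes "\<pi> permutes cells m1 m2 m3"
    and "\<forall>c\<in>cells m1 m2 m3. (\<lambda>(i, j, k). (i, j)) (\<pi> c) = (\<lambda>(i, j, k). (i, j)) c"
  shows "realisable_by_shuffles m1 m2 m3 (m1 * m2) \<pi>"
proof -
  let ?ks = "List.product [0..<m1] [0..<m2]"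
  have "{c\<in>cells m1 m2 m3. (\<lambda>(i, j, k). (i, j)) c = \<kappa>} \<in> table_lines m1 m2 m3"
    if "\<kappa> \<in> set ?ks" for \<kappa>
  proof -
    obtain i j where ij: "\<kappa> = (i, j)" by (cases \<kappa>)
    with that have bounds: "i < m1" "j < m2" by auto
    moreover have "{c\<in>cells m1 m2 m3. (\<lambda>(i, j, k). (i, j)) c = \<kappa>} = {(i, j, k) | k. k < m3}"
      using ij bounds by (auto simp: cells_def)
    ultimately show ?thesis unfolding table_lines_def by blast
  qed
  moreover have "(\<lambda>(i, j, k). (i, j)) ` cells m1 m2 m3 \<subseteq> set ?ks" by (auto simp: cells_def)
  ultimately show ?thesis
    using realisable_by_line_shuffles[OF assms, of ?ks] by (simp add: distinct_product)
qed

lemma realisable_along_axis1: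
  assumes "\<pi> permutes cells m1 m2 m3"
    and "\<forall>c\<in>cells m1 m2 m3. (\<lambda>(i, j, k). (j, k)) (\<pi> c) = (\<lambda>(i, j, k). (j, k)) c"
  shows "realisable_by_shuffles m1 m2 m3 (m2 * m3) \<pi>"
proof -
  let ?ks = "List.product [0..<m2] [0..<m3]"
  have "{c\<in>cells m1 m2 m3. (\<lambda>(i, j, k). (j, k)) c = \<kappa>} \<in> table_lines m1 m2 m3"
    if "\<kappa> \<in> set ?ks" for \<kappa>
  proof -
    obtain j k where jk: "\<kappa> = (j, k)" by (cases \<kappa>)
    with that have bounds: "j < m2" "k < m3" by auto
    moreover have "{c\<in>cells m1 m2 m3. (\<lambda>(i, j, k). (j, k)) c = \<kappa>} = {(i, j, k) | i. i < m1}"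
      using jk bounds by (auto simp: cells_def)
    ultimately show ?thesis unfolding table_lines_def by blast
  qed
  moreover have "(\<lambda>(i, j, k). (j, k)) ` cells m1 m2 m3 \<subseteq> set ?ks" by (auto simp: cells_def)
  ultimately show ?thesis
    using realisable_by_line_shuffles[OF assms, of ?ks] by (simp add: distinct_product)
qed

lemma realisable_along_axis2:
  assumes "\<pi> permutes cells m1 m2 m3"
    and "\<forall>c\<in>cells m1 m2 m3. (\<lambda>(i, j, k). (i, k)) (\<pi> c) = (\<lambda>(i, j, k). (i, k)) c"
  shows "realisable_by_shuffles m1 m2 m3 (m1 * m3) \<pi>"
proof -
  let ?ks = "List.product [0..<m1] [0..<m3]"
  have "{c\<in>cells m1 m2 m3. (\<lambda>(i, j, k). (i, k)) c = \<kappa>} \<in> table_lines m1 m2 m3"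
    if "\<kappa> \<in> set ?ks" for \<kappa>
  proof -
    obtain i k where ik: "\<kappa> = (i, k)" by (cases \<kappa>)
    with that have bounds: "i < m1" "k < m3" by auto
    moreover have "{c\<in>cells m1 m2 m3. (\<lambda>(i, j, k). (i, k)) c = \<kappa>} = {(i, j, k) | j. j < m2}"
      using ik bounds by (auto simp: cells_def)
    ultimately show ?thesis unfolding table_lines_def by blast
  qed
  moreover have "(\<lambda>(i, j, k). (i, k)) ` cells m1 m2 m3 \<subseteq> set ?ks" by (auto simp: cells_def)
  ultimately show ?thesis
    using realisable_by_line_shuffles[OF assms, of ?ks] by (simp add: distinct_product)
qed

lemma cells_grid_axis3:
  "bij_betw (\<lambda>c. ((\<lambda>(i, j, k). (i, j)) c, (\<lambda>(i, j, k). k) c)) (cells m1 m2 m3)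
     ((\<lambda>(i, j, k). (i, j)) ` cells m1 m2 m3 \<times> {..<m3})"
  by (auto simp: bij_betw_def inj_on_def cells_def image_iff)

lemma cells_grid_axis1:
  "bij_betw (\<lambda>c. ((\<lambda>(i, j, k). (j, k)) c, (\<lambda>(i, j, k). i) c)) (cells m1 m2 m3)
     ((\<lambda>(i, j, k). (j, k)) ` cells m1 m2 m3 \<times> {..<m1})"
  by (auto simp: bij_betw_def inj_on_def cells_def image_iff)

lemma arrangements_differ_by_permutation:
  assumes "bij_betw S C I" "bij_betw G C I"
  shows "\<exists>\<sigma>. \<sigma> permutes C \<and> (\<forall>c\<in>C. S (\<sigma> c) = G c)"
proof -
  define \<sigma> where "\<sigma> c = (if c \<in> C then inv_into C S (G c) else c)" for c
  have "bij_betw (inv_into C S \<circ> G) C C"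
    using assms(2) bij_betw_inv_into[OF assms(1)] by (rule bij_betw_trans)
  then have "bij_betw \<sigma> C C" by (rule bij_betw_cong[THEN iffD1, rotated]) (simp add: \<sigma>_def)
  then have "\<sigma> permutes C" by (rule bij_imp_permutes) (simp add: \<sigma>_def)
  moreover have "S (\<sigma> c) = G c" if "c \<in> C" for c
    using that assms(2) bij_betw_inv_into_right[OF assms(1)] by (auto simp: \<sigma>_def bij_betw_def)
  ultimately show ?thesis by blast
qed

lemma realisable_layer_permutation:
  assumes "\<beta> permutes cells m1 m2 m3"
    and "\<forall>c\<in>cells m1 m2 m3. (\<lambda>(i, j, k). k) (\<beta> c) = (\<lambda>(i, j, k). k) c"
  shows "realisable_by_shuffles m1 m2 m3 (m2 * m3 + m1 * m3 + m2 * m3) \<beta>"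
proof -
  let ?C = "cells m1 m2 m3"
  obtain \<alpha>' \<beta>' \<gamma>' where
    \<alpha>': "\<alpha>' permutes ?C" "\<forall>c\<in>?C. (\<lambda>(i, j, k). (j, k)) (\<alpha>' c) = (\<lambda>(i, j, k). (j, k)) c" and
    \<beta>': "\<beta>' permutes ?C" "\<forall>c\<in>?C. (\<lambda>(i, j, k). i) (\<beta>' c) = (\<lambda>(i, j, k). i) c" and
    \<gamma>': "\<gamma>' permutes ?C" "\<forall>c\<in>?C. (\<lambda>(i, j, k). (j, k)) (\<gamma>' c) = (\<lambda>(i, j, k). (j, k)) c" and
    \<beta>_eq: "\<beta> = \<alpha>' \<circ> \<beta>' \<circ> \<gamma>'"
    using permutes_three_stage_factorisation[OF finite_cells assms(1) cells_grid_axis1] by blast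
  have "(\<lambda>(i, j, k). k) (\<beta>' c) = (\<lambda>(i, j, k). k) c" if "c \<in> ?C" for c
    using \<alpha>'(2) \<gamma>'(2) assms(2)
    by (intro middle_factor_preserves[OF \<beta>_eq \<beta>'(1) \<gamma>'(1) _ _ _ that]) (auto simp: case_prod_beta)
  then have "\<forall>c\<in>?C. (\<lambda>(i, j, k). (i, k)) (\<beta>' c) = (\<lambda>(i, j, k). (i, k)) c"
    using \<beta>'(2) by (simp add: case_prod_beta)
  then show ?thesis unfolding \<beta>_eq
    by (intro realisable_by_shuffles_comp realisable_along_axis1 realisable_along_axis2 \<alpha>' \<beta>'(1) \<gamma>')
qed

lemma realisable_permutation:
  assumes "\<sigma> permutes cells m1 m2 m3"
  shows "realisable_by_shuffles m1 m2 m3 (m1 * m2 + (m2 * m3 + m1 * m3 + m2 * m3) + m1 * m2) \<sigma>"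
proof -
  let ?C = "cells m1 m2 m3"
  obtain \<alpha> \<beta> \<gamma> where
    \<alpha>: "\<alpha> permutes ?C" "\<forall>c\<in>?C. (\<lambda>(i, j, k). (i, j)) (\<alpha> c) = (\<lambda>(i, j, k). (i, j)) c" and
    \<beta>: "\<beta> permutes ?C" "\<forall>c\<in>?C. (\<lambda>(i, j, k). k) (\<beta> c) = (\<lambda>(i, j, k). k) c" and
    \<gamma>: "\<gamma> permutes ?C" "\<forall>c\<in>?C. (\<lambda>(i, j, k). (i, j)) (\<gamma> c) = (\<lambda>(i, j, k). (i, j)) c" and
    \<sigma>_eq: "\<sigma> = \<alpha> \<circ> \<beta> \<circ> \<gamma>"
    using permutes_three_stage_factorisation[OF finite_cells assms cells_grid_axis3] by blast
  show ?thesis unfolding \<sigma>_eq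
    by (intro realisable_by_shuffles_comp realisable_along_axis3 realisable_layer_permutation \<alpha> \<beta> \<gamma>)
qed

theorem mainTheorem10:
  fixes m1 m2 m3 :: nat and Items :: "'b set"
    and S G :: "nat \<times> nat \<times> nat \<Rightarrow> 'b"
  assumes "m1 \<ge> m2" and "m2 \<ge> m3"
    and "bij_betw S (cells m1 m2 m3) Items"
    and "bij_betw G (cells m1 m2 m3) Items"
  shows "\<exists>ps. length ps \<le> m1 * m2 + m3 * (2 * m2 + m1) + m1 * m2
           \<and> (\<forall>p \<in> set ps. is_shuffle m1 m2 m3 p)
           \<and> (\<forall>c \<in> cells m1 m2 m3. apply_shuffles S ps c = G c)"
proof -
  \<comment> \<open>The argument does not need the ordering hypotheses \<open>m1 \<ge> m2 \<ge> m3\<close>.\<close>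
  obtain \<sigma> where \<sigma>: "\<sigma> permutes cells m1 m2 m3" "\<forall>c\<in>cells m1 m2 m3. S (\<sigma> c) = G c"
    using arrangements_differ_by_permutation[OF assms(3,4)] by blast
  then obtain ps where "length ps = m1 * m2 + (m2 * m3 + m1 * m3 + m2 * m3) + m1 * m2"
    "\<forall>p\<in>set ps. is_shuffle m1 m2 m3 p" "foldr (\<circ>) ps id = \<sigma>"
    using realisable_permutation[OF \<sigma>(1)] unfolding realisable_by_shuffles_def by blast
  then show ?thesis using \<sigma>(2)
    by (intro exI[of _ ps]) (auto simp: apply_shuffles_eq_comp algebra_simps)
qed

end
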